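(* Assume (OP). Then for every $A\subseteq P$, $\operatorname{dcl}_{\mathcal L(P)}(A)=\operatorname{dcl}(A)$.
   Context: Let $\mathcal M=\langle M,<,+,0,\dots\rangle$ be an o-minimal expansion of an ordered group with a distinguished positive element $1$, in a language $\mathcal L$; $\operatorname{dcl}$ denotes definable closure in $\mathcal M$, and "$\mathcal L_A$-definable" means definable in $\mathcal M$ with parameters from $A$. Fix $P\subseteq M$ and let $\widetilde{\mathcal M}=\langle\mathcal M,P\rangle$, in the language $\mathcal L(P)$ obtained by adding a unary predicate for $P$; $\operatorname{dcl}_{\mathcal L(P)}$ is definable closure in $\widetilde{\mathcal M}$, and "$A$-definable" means definable in $\widetilde{\mathcal M}$ with parameters from $A$. A set $A$ is $\operatorname{dcl}$-independent over $P$ if no $a\in A$ lies in $\operatorname{dcl}((A\setminus\{a\})\cup P)$. $M^n$ has the product order topology. (OP): for every $A\subseteq M$ with $A\setminus P$ $\operatorname{dcl}$-independent over $P$ and every $A$-definable $V\subseteq M^n$, the topological closure $\overline V$ is $\mathcal L_A$-definable. *)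

theory Defs
  imports Complex_Main
begin

text \<open>A structure on the universe of type 'a is represented semantically by the
family of its parameter-free definable sets: D n is the collection of
0-definable subsets of M^n, where M^n is the set of lists of length n.\<close>

definition tuples :: "nat \<Rightarrow> 'a list set" where
  "tuples n = {xs. length xs = n}"

definition def_system :: "(nat \<Rightarrow> 'a list set set) \<Rightarrow> bool" where
  "def_system D \<longleftrightarrow>
     (\<forall>n S. S \<in> D n \<longrightarrow> S \<subseteq> tuples n) \<and>
     (\<forall>n. tuples n \<in> D n) \<and>
     (\<forall>n i j. i < n \<longrightarrow> j < n \<longrightarrow> {xs \<in> tuples n. xs ! i = xs ! j} \<in> D n) \<and>
     (\<forall>n S. S \<in> D n \<longrightarrow> tuples n - S \<in> D n) \<and>
     (\<forall>n S T. S \<in> D n \<longrightarrow> T \<in> D n \<longrightarrow> S \<inter> T \<in> D n) \<and>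
     (\<forall>n S. S \<in> D n \<longrightarrow> {xs @ [y] | xs y. xs \<in> S} \<in> D (Suc n)) \<and>
     (\<forall>n S. S \<in> D (Suc n) \<longrightarrow> butlast ` S \<in> D n) \<and>
     (\<forall>n S p. S \<in> D n \<longrightarrow> bij_betw p {..<n} {..<n} \<longrightarrow>
        {xs \<in> tuples n. map (\<lambda>i. xs ! p i) [0..<n] \<in> S} \<in> D n)"

text \<open>The 0-definable sets of the expansion by a unary predicate P: the least
family with the closure properties containing D and P.\<close>

inductive expdef :: "(nat \<Rightarrow> 'a list set set) \<Rightarrow> 'a set \<Rightarrow> nat \<Rightarrow> 'a list set \<Rightarrow> bool"
  for D :: "nat \<Rightarrow> 'a list set set" and P :: "'a set" where
  base: "S \<in> D n \<Longrightarrow> expdef D P n S"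
| pred: "expdef D P 1 {[p] | p. p \<in> P}"
| full: "expdef D P n (tuples n)"
| diag: "i < n \<Longrightarrow> j < n \<Longrightarrow> expdef D P n {xs \<in> tuples n. xs ! i = xs ! j}"
| compl: "expdef D P n S \<Longrightarrow> expdef D P n (tuples n - S)"
| inter: "expdef D P n S \<Longrightarrow> expdef D P n T \<Longrightarrow> expdef D P n (S \<inter> T)"
| cyl: "expdef D P n S \<Longrightarrow> expdef D P (Suc n) {xs @ [y] | xs y. xs \<in> S}"
| proj: "expdef D P (Suc n) S \<Longrightarrow> expdef D P n (butlast ` S)"
| perm: "expdef D P n S \<Longrightarrow> bij_betw p {..<n} {..<n} \<Longrightarrow>
          expdef D P n {xs \<in> tuples n. map (\<lambda>i. xs ! p i) [0..<n] \<in> S}"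

definition expand :: "(nat \<Rightarrow> 'a list set set) \<Rightarrow> 'a set \<Rightarrow> nat \<Rightarrow> 'a list set set" where
  "expand D P n = {S. expdef D P n S}"

text \<open>Sets definable with parameters from A: fibres of 0-definable sets over
tuples of parameters from A.\<close>

definition defin :: "(nat \<Rightarrow> 'a list set set) \<Rightarrow> 'a set \<Rightarrow> nat \<Rightarrow> 'a list set set" where
  "defin D A n = {{xs \<in> tuples n. xs @ as \<in> S} | S as.
                    set as \<subseteq> A \<and> S \<in> D (n + length as)}"

definition dcl :: "(nat \<Rightarrow> 'a list set set) \<Rightarrow> 'a set \<Rightarrow> 'a set" where
  "dcl D A = {b. {[b]} \<in> defin D A 1}"

definition dcl_indep_over :: "(nat \<Rightarrow> 'a list set set) \<Rightarrow> 'a set \<Rightarrow> 'a set \<Rightarrow> bool" where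
  "dcl_indep_over D B P \<longleftrightarrow> (\<forall>a\<in>B. a \<notin> dcl D ((B - {a}) \<union> P))"

definition interval_or_point :: "'a::linorder set \<Rightarrow> bool" where
  "interval_or_point I \<longleftrightarrow> (\<exists>a. I = {a}) \<or> (\<exists>a b. I = {a<..<b}) \<or> (\<exists>a. I = {a<..})
      \<or> (\<exists>b. I = {..<b}) \<or> I = UNIV"

definition o_minimal :: "(nat \<Rightarrow> 'a::linorder list set set) \<Rightarrow> bool" where
  "o_minimal D \<longleftrightarrow> (\<forall>S \<in> defin D UNIV 1.
      \<exists>F. finite F \<and> (\<forall>I\<in>F. interval_or_point I) \<and> {x. [x] \<in> S} = \<Union>F)"

text \<open>Order topology on M (as in HOL's class order_topology) and the closure
of a subset of M^n in the product topology, via basic open boxes.\<close>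

definition ord_open :: "'a::linorder set \<Rightarrow> bool" where
  "ord_open U \<longleftrightarrow> generate_topology (range lessThan \<union> range greaterThan) U"

definition prod_closure :: "nat \<Rightarrow> 'a::linorder list set \<Rightarrow> 'a list set" where
  "prod_closure n V = {xs \<in> tuples n. \<forall>Us. length Us = n \<and>
      (\<forall>i<n. ord_open (Us ! i) \<and> xs ! i \<in> Us ! i) \<longrightarrow>
      (\<exists>ys\<in>V. \<forall>i<n. ys ! i \<in> Us ! i)}"

definition OP :: "(nat \<Rightarrow> 'a::linorder list set set) \<Rightarrow> 'a set \<Rightarrow> bool" where
  "OP D P \<longleftrightarrow> (\<forall>A n V. dcl_indep_over D (A - P) P \<longrightarrow>
      V \<in> defin (expand D P) A n \<longrightarrow> prod_closure n V \<in> defin D A n)"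

end

theory Submission
  imports Defs
begin

text \<open>For \<open>A \<subseteq> P\<close> the set \<open>A - P\<close> is empty, hence trivially independent over \<open>P\<close>,
so (OP) applies to every \<open>A\<close>-definable set of \<open>\<langle>M, P\<rangle>\<close>. If \<open>b\<close> is \<open>\<L>(P)\<close>-definable
over \<open>A\<close>, then \<open>{b}\<close> is such a set; it is closed in the order topology, so (OP) makes
it \<open>\<L>\<^sub>A\<close>-definable.\<close>

lemma ord_open_separates:
  fixes x b :: "'a::linorder"
  assumes "x \<noteq> b"
  obtains U where "ord_open U" "x \<in> U" "b \<notin> U"
proof
  let ?U = "if x < b then lessThan b else greaterThan b"
  show "ord_open ?U"
    unfolding ord_open_def by (auto intro: generate_topology.Basis)
  show "x \<in> ?U" "b \<notin> ?U"
    using assms by auto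
qed

lemma prod_closure_singleton:
  fixes xs :: "'a::linorder list"
  assumes "xs \<in> tuples n"
  shows "prod_closure n {xs} = {xs}"
proof
  show "{xs} \<subseteq> prod_closure n {xs}"
    using assms by (auto simp: prod_closure_def)
next
  show "prod_closure n {xs} \<subseteq> {xs}"
  proof
    fix zs assume zs: "zs \<in> prod_closure n {xs}"
    then have len: "length zs = n" "length xs = n"
      using assms by (auto simp: prod_closure_def tuples_def)
    show "zs \<in> {xs}"
    proof (rule ccontr)
      assume "zs \<notin> {xs}"
      then obtain i where i: "i < n" "zs ! i \<noteq> xs ! i"
        using len by (metis nth_equalityI singletonI)
      then obtain U where U: "ord_open U" "zs ! i \<in> U" "xs ! i \<notin> U"
        using ord_open_separates by blast
      define Us where "Us = map (\<lambda>j. if j = i then U else UNIV) [0..<n]"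
      have "length Us = n \<and> (\<forall>j<n. ord_open (Us ! j) \<and> zs ! j \<in> Us ! j)"
        using U by (simp add: Us_def ord_open_def generate_topology.UNIV)
      then have "\<forall>j<n. xs ! j \<in> Us ! j"
        using zs unfolding prod_closure_def by blast
      then have "xs ! i \<in> Us ! i"
        using i by blast
      then show False
        using i U by (simp add: Us_def)
    qed
  qed
qed

lemma defin_subset_defin_expand: "defin D A n \<subseteq> defin (expand D P) A n"
  unfolding defin_def expand_def by (auto intro: expdef.base)

lemma dcl_subset_dcl_expand: "dcl D A \<subseteq> dcl (expand D P) A"
  unfolding dcl_def using defin_subset_defin_expand[of D A 1 P] by auto

lemma dcl_expand_subset_dcl_if_OP:
  fixes D :: "nat \<Rightarrow> 'a::linorder list set set"
  assumes "OP D P" and "A \<subseteq> P"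
  shows "dcl (expand D P) A \<subseteq> dcl D A"
proof
  fix b assume "b \<in> dcl (expand D P) A"
  then have "{[b]} \<in> defin (expand D P) A 1"
    by (simp add: dcl_def)
  moreover have "dcl_indep_over D (A - P) P"
    using \<open>A \<subseteq> P\<close> by (auto simp: dcl_indep_over_def)
  ultimately have "prod_closure 1 {[b]} \<in> defin D A 1"
    using \<open>OP D P\<close> unfolding OP_def by blast
  moreover have "prod_closure 1 {[b]} = {[b]}"
    by (rule prod_closure_singleton) (simp add: tuples_def)
  ultimately show "b \<in> dcl D A"
    by (simp add: dcl_def)
qed

theorem fact3p1:
  fixes D :: "nat \<Rightarrow> 'a::linordered_ab_group_add list set set"
    and e :: 'a and P :: "'a set"
  assumes "def_system D"
    and "{xs \<in> tuples 2. xs ! 0 < xs ! 1} \<in> D 2"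
    and "{xs \<in> tuples 3. xs ! 2 = xs ! 0 + xs ! 1} \<in> D 3"
    and "{[0]} \<in> D 1"
    and "0 < e" and "{[e]} \<in> D 1"
    and "o_minimal D"
    and "OP D P"
  shows "\<forall>A. A \<subseteq> P \<longrightarrow> dcl (expand D P) A = dcl D A"
proof (intro allI impI)
  fix A assume "A \<subseteq> P"
  show "dcl (expand D P) A = dcl D A"
    using dcl_expand_subset_dcl_if_OP[OF \<open>OP D P\<close> \<open>A \<subseteq> P\<close>] dcl_subset_dcl_expand
    by (rule subset_antisym)
qed

end
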